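(* Let $Q:(-\infty,-1)\to(-\infty,0)$ be the inverse of the strictly increasing function $G\mapsto G-e^G$ on $(-\infty,0)$, and define $R:\mathbb{R}\to\mathbb{R}$ by $R(V)=-2(1-e^{Q(V)})^2$ for $V<-1$ and $R(V)=4(V+1)$ for $V\ge -1$. Fix $m<-1$. For $n\in\mathbb{R}$ let $V(t;n)$ denote the unique solution of $V''+3V'=R(V)$, $t>0$, $V(0)=m$, $V'(0)=n$ (prime denoting $d/dt$, $V_t=dV/dt$). Define $\beta^0=\{n\in\mathbb{R}: V_t(t;n)>0 \text{ and } V(t;n)\le -1 \text{ for all } t>0\}$. Then $\beta^0$ consists of exactly one point. *)

theory Defs
  imports "HOL-Analysis.Analysis"
begin

definition Qinv :: "real \<Rightarrow> real" where
  "Qinv v = (THE G. G < 0 \<and> G - exp G = v)"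

definition Rfun :: "real \<Rightarrow> real" where
  "Rfun v = (if v < -1 then - 2 * (1 - exp (Qinv v))^2 else 4 * (v + 1))"

definition is_solution :: "real \<Rightarrow> real \<Rightarrow> (real \<Rightarrow> real) \<Rightarrow> (real \<Rightarrow> real) \<Rightarrow> bool" where
  "is_solution m n V V' \<longleftrightarrow>
     V 0 = m \<and> V' 0 = n \<and>
     (\<forall>t\<ge>0. (V has_real_derivative V' t) (at t within {0..})) \<and>
     (\<forall>t\<ge>0. (V' has_real_derivative (Rfun (V t) - 3 * V' t)) (at t within {0..}))"

definition beta0 :: "real \<Rightarrow> real set" where
  "beta0 m = {n. \<exists>V V'. is_solution m n V V' \<and>
                    (\<forall>t>0. V' t > 0 \<and> V t \<le> -1)}"

end

theory Submission
  imports Defs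
begin

text \<open>Write \<open>R(v) = 4(v + 1) + N(v)\<close>. On \<open>[m, \<infinity>)\<close> the slope of \<open>R\<close> lies in
  \<open>[\<kappa>, 4]\<close> with \<open>\<kappa> = 4 exp (Q m) > 0\<close>, so \<open>N\<close>, frozen below \<open>m\<close> (\<open>NL m\<close>), is
  nonnegative and \<open>(4 - \<kappa>)\<close>-Lipschitz.

  Existence: the bounded solutions of \<open>V'' + 3V' - 4(V + 1) = N(V)\<close>, \<open>V(0) = m\<close> are the fixed
  points of a variation-of-constants operator (characteristic roots \<open>1\<close> and \<open>-4\<close>, with the
  growing mode removed), a contraction with constant \<open>(4 - \<kappa>)/4\<close> for the sup norm. Since
  \<open>N \<ge> 0\<close> the fixed point stays below \<open>-1\<close>; a bounded solution below \<open>-1\<close> must increase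
  (otherwise \<open>R(V) \<le> -\<delta>\<close> drives it to \<open>-\<infinity>\<close>), so it stays in \<open>[m, -1]\<close>, where the frozen
  equation is the original one.

  Uniqueness: for two solutions in \<open>\<beta>\<^sup>0\<close>, \<open>W = V\<^sub>2 - V\<^sub>1\<close> has \<open>W(0) = 0\<close> and
  \<open>(e\<^bsup>3t\<^esup> W W')' \<ge> \<kappa> e\<^bsup>3t\<^esup> W\<^sup>2\<close>, so \<open>W\<^sup>2\<close> is nondecreasing and, unless \<open>W = 0\<close>,
  eventually grows linearly, contradicting \<open>V\<^sub>1, V\<^sub>2 \<in> [m, -1]\<close>.\<close>

lemma deriv_nonneg_imp_le_within:
  fixes f f' :: "real \<Rightarrow> real"
  assumes "a \<le> b" "{a..b} \<subseteq> S"
    and "\<And>t. a \<le> t \<Longrightarrow> t \<le> b \<Longrightarrow> (f has_real_derivative f' t) (at t within S)"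
    and "\<And>t. a < t \<Longrightarrow> t < b \<Longrightarrow> 0 \<le> f' t"
  shows "f a \<le> f b"
proof (cases "a = b")
  case False
  then have "a < b" using assms(1) by simp
  moreover have "(f has_derivative (\<lambda>h. f' t * h)) (at t within {a..b})" if "a \<le> t" "t \<le> b" for t
    using has_field_derivative_subset[OF assms(3)[OF that] assms(2)] by (simp add: has_field_derivative_def)
  ultimately obtain x where "x \<in> {a<..<b}" "f b - f a = f' x * (b - a)"
    using mvt_simple[of a b f "\<lambda>t h. f' t * h"] by blast
  moreover have "0 \<le> f' x * (b - a)" using assms(4) \<open>x \<in> {a<..<b}\<close> \<open>a < b\<close> by simp
  ultimately show ?thesis by simp
qed simp

lemma deriv_nonpos_imp_ge_within:
  fixes f f' :: "real \<Rightarrow> real"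
  assumes "a \<le> b" "{a..b} \<subseteq> S"
    and "\<And>t. a \<le> t \<Longrightarrow> t \<le> b \<Longrightarrow> (f has_real_derivative f' t) (at t within S)"
    and "\<And>t. a < t \<Longrightarrow> t < b \<Longrightarrow> f' t \<le> 0"
  shows "f b \<le> f a"
  using deriv_nonneg_imp_le_within[of a b S "\<lambda>t. - f t" "\<lambda>t. - f' t"] assms
  by (auto intro: DERIV_minus)

lemma abs_diff_le_of_deriv_bound:
  fixes f f' g g' :: "real \<Rightarrow> real"
  assumes "a \<le> b" "{a..b} \<subseteq> S"
    and "\<And>t. a \<le> t \<Longrightarrow> t \<le> b \<Longrightarrow> (f has_real_derivative f' t) (at t within S)"
    and "\<And>t. a \<le> t \<Longrightarrow> t \<le> b \<Longrightarrow> (g has_real_derivative g' t) (at t within S)"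
    and "\<And>t. a < t \<Longrightarrow> t < b \<Longrightarrow> \<bar>f' t\<bar> \<le> g' t"
  shows "\<bar>f b - f a\<bar> \<le> g b - g a"
proof -
  have "(\<lambda>t. g t - f t) a \<le> (\<lambda>t. g t - f t) b"
    by (rule deriv_nonneg_imp_le_within[OF assms(1,2), of _ "\<lambda>t. g' t - f' t"])
      (auto intro: DERIV_diff assms(3,4) dest: assms(5) simp: abs_le_iff)
  moreover have "(\<lambda>t. g t + f t) a \<le> (\<lambda>t. g t + f t) b"
    by (rule deriv_nonneg_imp_le_within[OF assms(1,2), of _ "\<lambda>t. g' t + f' t"])
      (auto intro: DERIV_add assms(3,4) dest: assms(5) simp: abs_le_iff)
  ultimately show ?thesis by linarith
qed

lemma unbounded_of_deriv_ge:
  fixes f f' :: "real \<Rightarrow> real"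
  assumes "0 \<le> a" "0 < c"
    and "\<And>t. a \<le> t \<Longrightarrow> (f has_real_derivative f' t) (at t within {0..})"
    and "\<And>t. a \<le> t \<Longrightarrow> c \<le> f' t"
  shows "\<exists>t\<ge>a. B < f t"
proof -
  define t where "t = a + (\<bar>B - f a\<bar> + 1) / c"
  have "a \<le> t" using \<open>0 < c\<close> by (simp add: t_def)
  have "(\<lambda>t. f t - c * t) a \<le> (\<lambda>t. f t - c * t) t"
    by (rule deriv_nonneg_imp_le_within[OF \<open>a \<le> t\<close>, of "{0..}" _ "\<lambda>s. f' s - c"])
      (use assms in \<open>auto intro!: derivative_eq_intros\<close>)
  moreover have "c * (t - a) = \<bar>B - f a\<bar> + 1" using \<open>0 < c\<close> by (simp add: t_def)
  ultimately have "f a + (\<bar>B - f a\<bar> + 1) \<le> f t" by (simp add: algebra_simps)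
  then show ?thesis using \<open>a \<le> t\<close> by (intro exI[of _ t]) auto
qed

lemma exp3_shift_ge: "4 * exp (3 * a) \<le> exp (3 * b)" if "a + 1 \<le> b" for a b :: real
proof -
  have "(4::real) \<le> exp 3" using exp_ge_add_one_self[of 3] by simp
  also have "\<dots> \<le> exp (3 * (b - a))" using that by simp
  finally have "exp (3 * a) * 4 \<le> exp (3 * a) * exp (3 * (b - a))" by simp
  then show ?thesis by (simp add: mult_exp_exp)
qed

lemma growth_of_exp3_deriv_ge:
  fixes P P' :: "real \<Rightarrow> real"
  assumes "0 \<le> t0" "t0 + 1 \<le> t" "0 \<le> c" "0 \<le> P t0"
    and "\<And>s. t0 \<le> s \<Longrightarrow> s \<le> t \<Longrightarrow> (P has_real_derivative P' s) (at s within {0..})"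
    and "\<And>s. t0 < s \<Longrightarrow> s < t \<Longrightarrow> c * exp (3 * s) \<le> P' s"
  shows "c / 4 * exp (3 * t) \<le> P t"
proof -
  have "(\<lambda>s. P s - c / 3 * exp (3 * s)) t0 \<le> (\<lambda>s. P s - c / 3 * exp (3 * s)) t"
    by (rule deriv_nonneg_imp_le_within[of t0 t "{0..}" _ "\<lambda>s. P' s - c * exp (3 * s)"])
      (use assms in \<open>auto intro!: derivative_eq_intros\<close>)
  moreover have "c * (4 * exp (3 * t0)) \<le> c * exp (3 * t)"
    using exp3_shift_ge[OF assms(2)] assms(3) by (rule mult_left_mono)
  ultimately show ?thesis using assms(4) by (simp add: algebra_simps)
qed

text \<open>If \<open>W \<le> 0\<close> at some time, then \<open>W\<close> stays \<open>\<le> 0\<close> (as \<open>F(V) < 0\<close>), so \<open>V\<close> decreases,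
  \<open>F(V) \<le> -\<delta> < 0\<close>, and the damping forces \<open>W \<le> -\<delta>/4\<close> eventually: \<open>V\<close> runs off to \<open>-\<infinity>\<close>.\<close>
lemma damped_ode_deriv_pos:
  fixes V W F :: "real \<Rightarrow> real"
  assumes "mono F"
    and V: "\<And>t. 0 \<le> t \<Longrightarrow> (V has_real_derivative W t) (at t within {0..})"
    and W: "\<And>t. 0 \<le> t \<Longrightarrow> (W has_real_derivative F (V t) - 3 * W t) (at t within {0..})"
    and neg: "\<And>t. 0 \<le> t \<Longrightarrow> F (V t) < 0"
    and below: "\<And>t. 0 \<le> t \<Longrightarrow> B \<le> V t"
    and "0 \<le> t0"
  shows "0 < W t0"
proof (rule ccontr)
  assume "\<not> 0 < W t0"
  have P: "((\<lambda>t. - (exp (3 * t) * W t)) has_real_derivative - (exp (3 * t) * F (V t)))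
             (at t within {0..})" if "0 \<le> t" for t
    by (rule derivative_eq_intros W[OF that] refl)+ (simp add: algebra_simps)
  have W_nonpos: "W t \<le> 0" if "t0 \<le> t" for t
  proof -
    have "- (exp (3 * t0) * W t0) \<le> - (exp (3 * t) * W t)"
      by (rule deriv_nonneg_imp_le_within[OF that, of "{0..}" _ "\<lambda>t. - (exp (3 * t) * F (V t))"])
        (use \<open>0 \<le> t0\<close> P neg in \<open>auto simp: mult_less_0_iff less_imp_le\<close>)
    then have "0 \<le> - (exp (3 * t) * W t)"
      using \<open>\<not> 0 < W t0\<close> by (smt (verit) exp_gt_zero mult_nonneg_nonpos)
    then show ?thesis by (simp add: mult_le_0_iff)
  qed
  have V_le: "V t \<le> V t0" if "t0 \<le> t" for t
    by (rule deriv_nonpos_imp_ge_within[OF that, of "{0..}" _ W]) (use \<open>0 \<le> t0\<close> V W_nonpos in auto)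
  define \<delta> where "\<delta> = - F (V t0)"
  have "0 < \<delta>" using neg[OF \<open>0 \<le> t0\<close>] by (simp add: \<delta>_def)
  have W_le: "\<delta> / 4 \<le> - W t" if "t0 + 1 \<le> t" for t
  proof -
    have "\<delta> / 4 * exp (3 * t) \<le> - (exp (3 * t) * W t)"
    proof (rule growth_of_exp3_deriv_ge[OF \<open>0 \<le> t0\<close> that, of \<delta> _ "\<lambda>t. - (exp (3 * t) * F (V t))"])
      fix s assume "t0 < s"
      then have "F (V s) \<le> - \<delta>" using monoD[OF \<open>mono F\<close> V_le[of s]] by (simp add: \<delta>_def)
      then have "\<delta> * exp (3 * s) \<le> - F (V s) * exp (3 * s)" by (intro mult_right_mono) auto
      then show "\<delta> * exp (3 * s) \<le> - (exp (3 * s) * F (V s))" by (simp add: mult.commute)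
    qed (use \<open>0 \<le> t0\<close> \<open>0 < \<delta>\<close> \<open>\<not> 0 < W t0\<close> P in \<open>auto simp: mult_le_0_iff\<close>)
    then have "exp (3 * t) * (\<delta> / 4) \<le> exp (3 * t) * (- W t)" by (simp add: algebra_simps)
    then show ?thesis by (simp only: mult_le_cancel_left_pos[OF exp_gt_zero])
  qed
  have "\<exists>t\<ge>t0 + 1. - B < - V t"
    by (rule unbounded_of_deriv_ge[of "t0 + 1" "\<delta> / 4" _ "\<lambda>t. - W t"])
      (use \<open>0 \<le> t0\<close> \<open>0 < \<delta>\<close> W_le in \<open>auto intro!: DERIV_minus V\<close>)
  then obtain t where "t0 + 1 \<le> t" "V t < B" by auto
  with below[of t] \<open>0 \<le> t0\<close> show False by simp
qed

lemma damped_ode_bounded_solutions_eq: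
  fixes U U' V V' F :: "real \<Rightarrow> real"
  assumes strong_mono: "\<And>a b. a \<in> S \<Longrightarrow> b \<in> S \<Longrightarrow> \<kappa> * (b - a)\<^sup>2 \<le> (b - a) * (F b - F a)"
    and "0 < \<kappa>"
    and U: "\<And>t. 0 \<le> t \<Longrightarrow> (U has_real_derivative U' t) (at t within {0..})"
    and U': "\<And>t. 0 \<le> t \<Longrightarrow> (U' has_real_derivative F (U t) - 3 * U' t) (at t within {0..})"
    and V: "\<And>t. 0 \<le> t \<Longrightarrow> (V has_real_derivative V' t) (at t within {0..})"
    and V': "\<And>t. 0 \<le> t \<Longrightarrow> (V' has_real_derivative F (V t) - 3 * V' t) (at t within {0..})"
    and range: "\<And>t. 0 \<le> t \<Longrightarrow> U t \<in> S \<and> V t \<in> S"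
    and bounded: "\<And>t. 0 \<le> t \<Longrightarrow> \<bar>V t - U t\<bar> \<le> B"
    and "U 0 = V 0" "0 \<le> t"
  shows "U t = V t"
proof (rule ccontr)
  define W where "W t = V t - U t" for t
  define W' where "W' t = V' t - U' t" for t
  define D where "D t = exp (3 * t) * ((W' t)\<^sup>2 + W t * (F (V t) - F (U t)))" for t
  text \<open>The weighted energy \<open>e\<^bsup>3t\<^esup> W W'\<close> has derivative \<open>D \<ge> \<kappa> e\<^bsup>3t\<^esup> W\<^sup>2\<close>.\<close>
  have dE: "((\<lambda>t. exp (3 * t) * (W t * W' t)) has_real_derivative D t) (at t within {0..})"
    if "0 \<le> t" for t
    unfolding W_def W'_def
    by (rule derivative_eq_intros U V U' V' that refl)+ (simp add: D_def W_def W'_def algebra_simps power2_eq_square)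
  have D_ge: "\<kappa> * (W t)\<^sup>2 * exp (3 * t) \<le> D t" if "0 \<le> t" for t
  proof -
    have "\<kappa> * (W t)\<^sup>2 \<le> W t * (F (V t) - F (U t))"
      using strong_mono[of "U t" "V t"] range[OF that] by (simp add: W_def)
    then have "\<kappa> * (W t)\<^sup>2 \<le> (W' t)\<^sup>2 + W t * (F (V t) - F (U t))"
      using zero_le_power2[of "W' t"] by linarith
    then show ?thesis unfolding D_def by (simp add: mult.commute)
  qed
  have D_nonneg: "0 \<le> D t" if "0 \<le> t" for t
    using D_ge[OF that] \<open>0 < \<kappa>\<close> by (smt (verit) exp_gt_zero mult_nonneg_nonneg zero_le_power2)
  have E_nonneg: "0 \<le> exp (3 * t) * (W t * W' t)" if "0 \<le> t" for t
  proof -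
    have "(\<lambda>t. exp (3 * t) * (W t * W' t)) 0 \<le> (\<lambda>t. exp (3 * t) * (W t * W' t)) t"
      by (rule deriv_nonneg_imp_le_within[OF that, of "{0..}" _ D]) (use dE D_nonneg in auto)
    then show ?thesis using \<open>U 0 = V 0\<close> by (simp add: W_def)
  qed
  have dW_sq: "((\<lambda>t. (W t)\<^sup>2) has_real_derivative 2 * (W t * W' t)) (at t within {0..})" if "0 \<le> t" for t
    unfolding W_def W'_def by (rule derivative_eq_intros U V that refl)+ (simp add: algebra_simps)
  assume "U t \<noteq> V t"
  define w where "w = (W t)\<^sup>2"
  have "0 < w" using \<open>U t \<noteq> V t\<close> by (simp add: w_def W_def)
  have W_sq_ge: "w \<le> (W s)\<^sup>2" if "t \<le> s" for s
    by (unfold w_def, rule deriv_nonneg_imp_le_within[OF that, of "{0..}" _ "\<lambda>s. 2 * (W s * W' s)"])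
      (use \<open>0 \<le> t\<close> dW_sq E_nonneg in \<open>auto simp: zero_le_mult_iff\<close>)
  have WW'_ge: "\<kappa> * w / 4 \<le> W s * W' s" if "t + 1 \<le> s" for s
  proof -
    have "\<kappa> * w / 4 * exp (3 * s) \<le> exp (3 * s) * (W s * W' s)"
    proof (rule growth_of_exp3_deriv_ge[OF \<open>0 \<le> t\<close> that, of "\<kappa> * w" _ D])
      fix r assume "t < r"
      then have "\<kappa> * w \<le> \<kappa> * (W r)\<^sup>2" using W_sq_ge[of r] \<open>0 < \<kappa>\<close> by simp
      then have "\<kappa> * w * exp (3 * r) \<le> \<kappa> * (W r)\<^sup>2 * exp (3 * r)" by (rule mult_right_mono) simp
      then show "\<kappa> * w * exp (3 * r) \<le> D r" using D_ge[of r] \<open>0 \<le> t\<close> \<open>t < r\<close> by simp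
    qed (use \<open>0 \<le> t\<close> \<open>0 < \<kappa>\<close> \<open>0 < w\<close> dE E_nonneg in auto)
    then show ?thesis by (simp add: mult.commute)
  qed
  obtain s where "B\<^sup>2 < (W s)\<^sup>2" "t + 1 \<le> s"
    using unbounded_of_deriv_ge[of "t + 1" "\<kappa> * w / 2" "\<lambda>s. (W s)\<^sup>2" "\<lambda>s. 2 * (W s * W' s)" "B\<^sup>2"]
      \<open>0 \<le> t\<close> \<open>0 < \<kappa>\<close> \<open>0 < w\<close> dW_sq WW'_ge by fastforce
  moreover have "\<bar>W s\<bar> \<le> \<bar>B\<bar>" using bounded[of s] \<open>0 \<le> t\<close> \<open>t + 1 \<le> s\<close> by (simp add: W_def)
  ultimately show False by (simp add: abs_le_square_iff)
qed

lemma sub_exp_strict_mono: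
  fixes a b :: real
  assumes "a < b" "b \<le> 0"
  shows "a - exp a < b - exp b"
proof -
  have "(\<lambda>g. g - exp g) a < (\<lambda>g. g - exp g) b"
  proof (rule DERIV_pos_imp_increasing_open[OF assms(1)])
    fix x assume "a < x" "x < b"
    then show "\<exists>y. ((\<lambda>g. g - exp g) has_real_derivative y) (at x) \<and> 0 < y"
      using assms(2) by (intro exI[of _ "1 - exp x"]) (auto intro!: derivative_eq_intros)
  qed (auto intro!: continuous_intros)
  then show ?thesis by simp
qed

lemma Qinv_unique:
  fixes v :: real
  assumes "v < -1"
  shows "\<exists>!G. G < 0 \<and> G - exp G = v"
proof -
  have "\<exists>G\<ge>v. G \<le> 0 \<and> G - exp G = v"
    using assms by (intro IVT'[of "\<lambda>g. g - exp g"]) (auto intro!: continuous_intros)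
  then obtain G where G: "v \<le> G" "G \<le> 0" "G - exp G = v" by blast
  with assms have "G < 0" by (cases "G = 0") auto
  show ?thesis
  proof (rule ex1I[of _ G])
    fix H assume "H < 0 \<and> H - exp H = v"
    then show "H = G"
      using sub_exp_strict_mono[of G H] sub_exp_strict_mono[of H G] G \<open>G < 0\<close>
      by (cases H G rule: linorder_cases) auto
  qed (use G \<open>G < 0\<close> in auto)
qed

lemma Qinv:
  assumes "v < -1"
  shows "Qinv v < 0" "Qinv v - exp (Qinv v) = v"
  using theI'[OF Qinv_unique[OF assms]] by (auto simp: Qinv_def)

text \<open>\<open>Qbar\<close> extends \<open>Q\<close> continuously to \<open>(-\<infinity>, -1]\<close> by \<open>Q(-1) = 0\<close>; then
  \<open>R(v) = -2 (1 - e\<^bsup>Qbar v\<^esup>)\<^sup>2\<close> on the whole ray.\<close>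
definition Qbar :: "real \<Rightarrow> real" where
  "Qbar v = (if v < -1 then Qinv v else 0)"

lemma Qbar:
  assumes "v \<le> -1"
  shows "Qbar v \<le> 0" "Qbar v - exp (Qbar v) = v" "Rfun v = - 2 * (1 - exp (Qbar v))\<^sup>2"
  using assms Qinv[of v] by (auto simp: Qbar_def Rfun_def)

lemma Qbar_mono:
  assumes "v1 \<le> v2" "v2 \<le> -1"
  shows "Qbar v1 \<le> Qbar v2"
  using sub_exp_strict_mono[of "Qbar v2" "Qbar v1"] Qbar[of v1] Qbar[of v2] assms by force

text \<open>Along \<open>G\<close>, \<open>d(-2(1 - e\<^sup>G)\<^sup>2) / d(G - e\<^sup>G) = 4e\<^sup>G\<close>, which lies in \<open>[4e\<^bsup>g0\<^esup>, 4]\<close>.\<close>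
lemma R_branch_slope:
  fixes g0 g1 g2 :: real
  assumes "g0 \<le> g1" "g1 \<le> g2" "g2 \<le> 0"
  shows "4 * exp g0 * ((g2 - exp g2) - (g1 - exp g1))
           \<le> 2 * (1 - exp g1)\<^sup>2 - 2 * (1 - exp g2)\<^sup>2"
    and "2 * (1 - exp g1)\<^sup>2 - 2 * (1 - exp g2)\<^sup>2 \<le> 4 * ((g2 - exp g2) - (g1 - exp g1))"
proof -
  define h where "h c g = - 2 * (1 - exp g)\<^sup>2 - c * (g - exp g)" for c g :: real
  have dh: "(h c has_real_derivative (1 - exp x) * (4 * exp x - c)) (at x)" for c x
    unfolding h_def by (rule derivative_eq_intros refl | simp)+ (simp add: algebra_simps power2_eq_square)
  have "h (4 * exp g0) g1 \<le> h (4 * exp g0) g2"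
  proof (rule DERIV_nonneg_imp_increasing_open[OF assms(2)])
    fix x assume "g1 < x" "x < g2"
    with assms have "0 \<le> (1 - exp x) * (4 * exp x - 4 * exp g0)" by (intro mult_nonneg_nonneg) auto
    then show "\<exists>y. (h (4 * exp g0) has_real_derivative y) (at x) \<and> 0 \<le> y" using dh by blast
  qed (auto simp: h_def intro!: continuous_intros)
  then show "4 * exp g0 * ((g2 - exp g2) - (g1 - exp g1)) \<le> 2 * (1 - exp g1)\<^sup>2 - 2 * (1 - exp g2)\<^sup>2"
    by (simp add: h_def algebra_simps)
  have "h 4 g2 \<le> h 4 g1"
  proof (rule DERIV_nonpos_imp_decreasing_open[OF assms(2)])
    fix x assume "g1 < x" "x < g2"
    with assms have "(1 - exp x) * (4 * exp x - 4) \<le> 0" by (intro mult_nonneg_nonpos) auto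
    then show "\<exists>y. (h 4 has_real_derivative y) (at x) \<and> y \<le> 0" using dh by blast
  qed (auto simp: h_def intro!: continuous_intros)
  then show "2 * (1 - exp g1)\<^sup>2 - 2 * (1 - exp g2)\<^sup>2 \<le> 4 * ((g2 - exp g2) - (g1 - exp g1))"
    by (simp add: h_def algebra_simps)
qed

definition kappa :: "real \<Rightarrow> real" where
  "kappa m = 4 * exp (Qinv m)"

lemma kappa_bounds:
  assumes "m < -1"
  shows "0 < kappa m" "kappa m < 4"
  using Qinv[OF assms] by (auto simp: kappa_def)

lemma Rfun_slope_le_minus1:
  assumes "m < -1" "m \<le> v1" "v1 \<le> v2" "v2 \<le> -1"
  shows "kappa m * (v2 - v1) \<le> Rfun v2 - Rfun v1 \<and> Rfun v2 - Rfun v1 \<le> 4 * (v2 - v1)"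
proof -
  have "Qbar m \<le> Qbar v1" "Qbar v1 \<le> Qbar v2" "Qbar v2 \<le> 0"
    using assms by (auto intro: Qbar_mono Qbar)
  moreover have "Qbar m = Qinv m" using assms by (simp add: Qbar_def)
  ultimately show ?thesis
    using R_branch_slope[of "Qbar m" "Qbar v1" "Qbar v2"] Qbar[of v1] Qbar[of v2] assms
    by (auto simp: kappa_def)
qed

lemma Rfun_slope_ge_minus1:
  assumes "m < -1" "-1 \<le> v1" "v1 \<le> v2"
  shows "kappa m * (v2 - v1) \<le> Rfun v2 - Rfun v1 \<and> Rfun v2 - Rfun v1 \<le> 4 * (v2 - v1)"
proof -
  have "kappa m * (v2 - v1) \<le> 4 * (v2 - v1)"
    using assms kappa_bounds[OF assms(1)] by (intro mult_right_mono) auto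
  then show ?thesis using assms by (auto simp: Rfun_def algebra_simps)
qed

lemma Rfun_slope:
  assumes "m < -1" "m \<le> v1" "v1 \<le> v2"
  shows "kappa m * (v2 - v1) \<le> Rfun v2 - Rfun v1 \<and> Rfun v2 - Rfun v1 \<le> 4 * (v2 - v1)"
proof -
  consider "v2 \<le> -1" | "-1 \<le> v1" | "v1 < -1" "-1 < v2" by linarith
  then show ?thesis
  proof cases
    case 3
    then show ?thesis
      using Rfun_slope_le_minus1[of m v1 "-1"] Rfun_slope_ge_minus1[of m "-1" v2] assms
      by (auto simp: algebra_simps)
  qed (use Rfun_slope_le_minus1 Rfun_slope_ge_minus1 assms in blast)+
qed

lemma Rfun_strongly_mono:
  assumes "m < -1" "m \<le> a" "m \<le> b"
  shows "kappa m * (b - a)\<^sup>2 \<le> (b - a) * (Rfun b - Rfun a)"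
proof (cases a b rule: le_cases)
  case le
  have "(b - a) * (kappa m * (b - a)) \<le> (b - a) * (Rfun b - Rfun a)"
    using Rfun_slope[OF assms(1,2) le] le by (intro mult_left_mono) auto
  then show ?thesis by (simp add: power2_eq_square algebra_simps)
next
  case ge
  have "(a - b) * (kappa m * (a - b)) \<le> (a - b) * (Rfun a - Rfun b)"
    using Rfun_slope[OF assms(1,3) ge] ge by (intro mult_left_mono) auto
  then show ?thesis by (simp add: power2_eq_square algebra_simps)
qed

text \<open>Freezing \<open>R\<close> below \<open>m\<close> makes its nonlinear part \<open>R(v) - 4(v + 1)\<close> globally
  \<open>(4 - \<kappa>)\<close>-Lipschitz; \<open>Rtr\<close> is the correspondingly modified right-hand side.\<close>
definition NL :: "real \<Rightarrow> real \<Rightarrow> real" where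
  "NL m v = Rfun (max v m) - 4 * (max v m + 1)"

definition Rtr :: "real \<Rightarrow> real \<Rightarrow> real" where
  "Rtr m v = 4 * (v + 1) + NL m v"

lemma NL_slope:
  assumes "m < -1" "v1 \<le> v2"
  shows "0 \<le> NL m v1 - NL m v2 \<and> NL m v1 - NL m v2 \<le> (4 - kappa m) * (v2 - v1)"
proof -
  have w: "m \<le> max v1 m" "max v1 m \<le> max v2 m" "max v2 m - max v1 m \<le> v2 - v1"
    using assms by auto
  have "(4 - kappa m) * (max v2 m - max v1 m) \<le> (4 - kappa m) * (v2 - v1)"
    using w kappa_bounds[OF assms(1)] by (intro mult_left_mono) auto
  with Rfun_slope[OF assms(1) w(1,2)] show ?thesis by (auto simp: NL_def algebra_simps)
qed

lemma NL_eq_0: "-1 \<le> v \<Longrightarrow> NL m v = 0"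
  by (simp add: NL_def Rfun_def max_def)

lemma NL_bounds:
  assumes "m < -1"
  shows "0 \<le> NL m v" "NL m v \<le> NL m m"
proof -
  show "0 \<le> NL m v" using NL_slope[OF assms, of v "max v 0"] NL_eq_0 by auto
  have "NL m (min v m) = NL m m" by (simp add: NL_def)
  then show "NL m v \<le> NL m m" using NL_slope[OF assms, of "min v m" v] by auto
qed

lemma NL_lipschitz:
  assumes "m < -1"
  shows "\<bar>NL m v1 - NL m v2\<bar> \<le> (4 - kappa m) * \<bar>v1 - v2\<bar>"
  using NL_slope[OF assms, of v1 v2] NL_slope[OF assms, of v2 v1]
  by (cases "v1 \<le> v2") (auto simp: abs_if algebra_simps)

lemma continuous_on_NL:
  assumes "m < -1"
  shows "continuous_on UNIV (NL m)"
proof (rule lipschitz_on_continuous_on)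
  show "(4 - kappa m)-lipschitz_on UNIV (NL m)"
    using NL_lipschitz[OF assms] kappa_bounds[OF assms] by (auto simp: lipschitz_on_def dist_real_def)
qed

lemma Rtr_eq_Rfun: "m \<le> v \<Longrightarrow> Rtr m v = Rfun v"
  by (simp add: Rtr_def NL_def)

lemma Rtr_slope:
  assumes "m < -1" "v1 \<le> v2"
  shows "kappa m * (v2 - v1) \<le> Rtr m v2 - Rtr m v1"
  using NL_slope[OF assms] by (auto simp: Rtr_def algebra_simps)

lemma mono_Rtr:
  assumes "m < -1"
  shows "mono (Rtr m)"
proof
  fix v1 v2 :: real assume "v1 \<le> v2"
  then have "0 \<le> kappa m * (v2 - v1)" using kappa_bounds[OF assms] by simp
  then show "Rtr m v1 \<le> Rtr m v2" using Rtr_slope[OF assms \<open>v1 \<le> v2\<close>] by simp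
qed

lemma Rtr_neg:
  assumes "m < -1" "v < -1"
  shows "Rtr m v < 0"
proof -
  have "Rtr m (-1) = 0" using assms by (simp add: Rtr_def NL_eq_0)
  moreover have "0 < kappa m * (-1 - v)" using kappa_bounds[OF assms(1)] assms by simp
  ultimately show ?thesis using Rtr_slope[OF assms(1), of v "-1"] assms by simp
qed

definition wint :: "real \<Rightarrow> (real \<Rightarrow> real) \<Rightarrow> real \<Rightarrow> real" where
  "wint c f t = integral {0..t} (\<lambda>s. exp (c * s) * f s)"

lemma wint_0 [simp]: "wint c f 0 = 0"
  by (simp add: wint_def)

lemma wint_has_derivative:
  assumes "continuous_on {0..} f" "0 \<le> t"
  shows "(wint c f has_real_derivative exp (c * t) * f t) (at t within {0..})"
proof -
  have "(wint c f has_real_derivative exp (c * t) * f t) (at t within {0..t+1})"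
    unfolding wint_def[abs_def]
    by (rule integral_has_real_derivative)
      (use assms in \<open>auto intro!: continuous_intros intro: continuous_on_subset\<close>)
  moreover have "at t within {0..t+1} = at t within {0..}"
    by (rule at_within_nhd[where S="{t-1<..<t+1}"]) auto
  ultimately show ?thesis by simp
qed

lemma exp_wint_has_derivative:
  assumes "continuous_on {0..} f" "0 \<le> t"
  shows "((\<lambda>t. exp (- c * t) * wint c f t) has_real_derivative
           f t - c * (exp (- c * t) * wint c f t)) (at t within {0..})"
  by (rule DERIV_cong[OF DERIV_mult'[OF _ wint_has_derivative[OF assms]]])
    (auto intro!: derivative_eq_intros simp: mult.assoc[symmetric] mult_exp_exp)

lemma wint_diff:
  assumes "continuous_on {0..} f" "continuous_on {0..} g"
  shows "wint c (\<lambda>s. f s - g s) t = wint c f t - wint c g t"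
proof -
  have "(\<lambda>s. exp (c * s) * h s) integrable_on {0..t}" if "continuous_on {0..} h" for h
    using that by (intro integrable_continuous_interval continuous_intros)
      (auto intro: continuous_on_subset)
  with assms show ?thesis by (simp add: wint_def right_diff_distrib integral_diff)
qed

lemma wint_minus1_le_wint_4:
  assumes "continuous_on {0..} f" "\<And>s. 0 \<le> s \<Longrightarrow> 0 \<le> f s" "0 \<le> t"
  shows "wint (-1) f t \<le> wint 4 f t"
proof -
  have "(\<lambda>t. wint 4 f t - wint (-1) f t) 0 \<le> (\<lambda>t. wint 4 f t - wint (-1) f t) t"
  proof (rule deriv_nonneg_imp_le_within[OF assms(3), of "{0..}" _ "\<lambda>s. exp (4 * s) * f s - exp (- s) * f s"])
    fix s :: real assume "0 \<le> s"
    then show "((\<lambda>t. wint 4 f t - wint (-1) f t) has_real_derivative exp (4 * s) * f s - exp (- s) * f s) (at s within {0..})"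
      using DERIV_diff[OF wint_has_derivative[OF assms(1) \<open>0 \<le> s\<close>, of 4]
          wint_has_derivative[OF assms(1) \<open>0 \<le> s\<close>, of "-1"]] by simp
  next
    fix s :: real assume "0 < s"
    then have "exp (- s) * f s \<le> exp (4 * s) * f s" using assms(2)[of s] by (intro mult_right_mono) auto
    then show "0 \<le> exp (4 * s) * f s - exp (- s) * f s" by simp
  qed auto
  then show ?thesis by simp
qed

text \<open>\<open>wint_inf f = \<integral>\<^sub>0\<^sup>\<infinity> e\<^sup>-\<^sup>s f(s) ds\<close>, the limit existing for bounded continuous \<open>f\<close>.\<close>
definition wint_inf :: "(real \<Rightarrow> real) \<Rightarrow> real" where
  "wint_inf f = lim (\<lambda>k::nat. wint (-1) f (real k))"

context
  fixes f :: "real \<Rightarrow> real" and M :: real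
  assumes cont: "continuous_on {0..} f" and bnd: "\<And>s. 0 \<le> s \<Longrightarrow> \<bar>f s\<bar> \<le> M"
begin

lemma wint_minus1_increment:
  assumes "0 \<le> t1" "t1 \<le> t2"
  shows "\<bar>wint (-1) f t2 - wint (-1) f t1\<bar> \<le> M * exp (- t1) - M * exp (- t2)"
proof -
  have "\<bar>wint (-1) f t2 - wint (-1) f t1\<bar> \<le> - M * exp (- t2) - - M * exp (- t1)"
  proof (rule abs_diff_le_of_deriv_bound[OF assms(2), of "{0..}"])
    fix s :: real assume "t1 \<le> s"
    then show "(wint (-1) f has_real_derivative exp (- s) * f s) (at s within {0..})"
      using wint_has_derivative[OF cont, of s "-1"] assms by simp
  next
    fix s :: real
    show "((\<lambda>t. - M * exp (- t)) has_real_derivative M * exp (- s)) (at s within {0..})"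
      by (auto intro!: derivative_eq_intros)
  next
    fix s :: real assume "t1 < s"
    then show "\<bar>exp (- s) * f s\<bar> \<le> M * exp (- s)"
      using bnd[of s] assms by (simp add: abs_mult mult.commute)
  qed (use assms in auto)
  then show ?thesis by simp
qed

lemma convergent_wint_minus1: "convergent (\<lambda>k. wint (-1) f (real k))"
proof -
  define a where "a k = wint (-1) f (real k) + M * exp (- real k)" for k :: nat
  have "a k' \<le> a k" if "k \<le> k'" for k k'
    using wint_minus1_increment[of "real k" "real k'"] that by (simp add: a_def abs_le_iff)
  then have "decseq a" by (simp add: decseq_def)
  moreover have "- M \<le> a k" for k
  proof -
    have "0 \<le> M * exp (- real k)" using bnd[of 0] by simp
    then show ?thesis using wint_minus1_increment[of 0 "real k"] by (simp add: a_def abs_le_iff)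
  qed
  ultimately obtain L where "a \<longlonglongrightarrow> L" using decseq_convergent by blast
  moreover have "(\<lambda>k. exp (- real k)) \<longlonglongrightarrow> 0"
  proof -
    have "(\<lambda>k. exp (-1) ^ k) \<longlonglongrightarrow> (0::real)" by (rule LIMSEQ_power_zero) simp
    moreover have "exp (- real k) = exp (-1) ^ k" for k
      using exp_of_nat_mult[of k "-1"] by simp
    ultimately show ?thesis by simp
  qed
  ultimately have "(\<lambda>k. a k - M * exp (- real k)) \<longlonglongrightarrow> L - M * 0"
    by (intro tendsto_intros)
  then show ?thesis by (auto simp: a_def convergent_def)
qed

lemma wint_minus1_tendsto: "(\<lambda>k. wint (-1) f (real k)) \<longlonglongrightarrow> wint_inf f"
  using convergent_wint_minus1 by (simp add: wint_inf_def convergent_LIMSEQ_iff)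

lemma wint_inf_tail:
  assumes "0 \<le> t"
  shows "\<bar>wint_inf f - wint (-1) f t\<bar> \<le> M * exp (- t)"
proof (rule LIMSEQ_le_const2)
  show "(\<lambda>k. \<bar>wint (-1) f (real k) - wint (-1) f t\<bar>) \<longlonglongrightarrow> \<bar>wint_inf f - wint (-1) f t\<bar>"
    by (intro tendsto_intros wint_minus1_tendsto)
  have "\<bar>wint (-1) f (real k) - wint (-1) f t\<bar> \<le> M * exp (- t)" if "t \<le> real k" for k
  proof -
    have "0 \<le> M * exp (- real k)" using bnd[of 0] by simp
    then show ?thesis using wint_minus1_increment[OF assms that] by linarith
  qed
  then show "\<exists>N. \<forall>k\<ge>N. \<bar>wint (-1) f (real k) - wint (-1) f t\<bar> \<le> M * exp (- t)"
    by (intro exI[of _ "nat \<lceil>t\<rceil>"]) (auto dest!: ceiling_le)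
qed

lemma wint_minus1_le_wint_inf:
  assumes "\<And>s. 0 \<le> s \<Longrightarrow> 0 \<le> f s" "0 \<le> t"
  shows "wint (-1) f t \<le> wint_inf f"
proof (rule LIMSEQ_le_const[OF wint_minus1_tendsto])
  have "wint (-1) f t \<le> wint (-1) f (real k)" if "t \<le> real k" for k
  proof (rule deriv_nonneg_imp_le_within[OF that, of "{0..}" _ "\<lambda>s. exp (- s) * f s"])
    fix s :: real assume "t \<le> s"
    then show "(wint (-1) f has_real_derivative exp (- s) * f s) (at s within {0..})"
      using wint_has_derivative[OF cont, of s "-1"] assms(2) by simp
  qed (use assms in auto)
  then show "\<exists>N. \<forall>k\<ge>N. wint (-1) f t \<le> wint (-1) f (real k)"
    by (intro exI[of _ "nat \<lceil>t\<rceil>"]) (auto dest!: ceiling_le)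
qed

lemma wint_4_minus_wint_minus1:
  assumes "0 \<le> t"
  shows "\<bar>wint 4 f t - wint (-1) f t\<bar> \<le> M * exp (4 * t) / 4"
proof -
  have "\<bar>(\<lambda>t. wint 4 f t - wint (-1) f t) t - (\<lambda>t. wint 4 f t - wint (-1) f t) 0\<bar>
          \<le> M * exp (4 * t) / 4 - M * exp (4 * 0) / 4"
  proof (rule abs_diff_le_of_deriv_bound[OF assms, of "{0..}"])
    fix s :: real assume "0 \<le> s"
    then show "((\<lambda>t. wint 4 f t - wint (-1) f t) has_real_derivative (exp (4 * s) - exp (- s)) * f s) (at s within {0..})"
      using DERIV_diff[OF wint_has_derivative[OF cont \<open>0 \<le> s\<close>, of 4]
          wint_has_derivative[OF cont \<open>0 \<le> s\<close>, of "-1"]] by (simp add: algebra_simps)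
  next
    fix s :: real
    show "((\<lambda>t. M * exp (4 * t) / 4) has_real_derivative M * exp (4 * s)) (at s within {0..})"
      by (auto intro!: derivative_eq_intros)
  next
    fix s :: real assume "0 < s"
    then have "\<bar>exp (4 * s) - exp (- s)\<bar> \<le> exp (4 * s)" by (simp add: abs_le_iff)
    then show "\<bar>(exp (4 * s) - exp (- s)) * f s\<bar> \<le> M * exp (4 * s)"
      unfolding abs_mult using bnd[of s] \<open>0 < s\<close> by (simp add: mult.commute mult_mono')
  qed auto
  moreover have "0 \<le> M" using bnd[of 0] by simp
  ultimately show ?thesis by simp
qed

end

lemma wint_inf_diff:
  assumes "continuous_on {0..} f" "\<And>s. 0 \<le> s \<Longrightarrow> \<bar>f s\<bar> \<le> M"
    and "continuous_on {0..} g" "\<And>s. 0 \<le> s \<Longrightarrow> \<bar>g s\<bar> \<le> M'"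
  shows "wint_inf (\<lambda>s. f s - g s) = wint_inf f - wint_inf g"
proof (rule LIMSEQ_unique)
  have "\<bar>f s - g s\<bar> \<le> M + M'" if "0 \<le> s" for s
    using assms(2)[OF that] assms(4)[OF that] by linarith
  then show "(\<lambda>k. wint (-1) (\<lambda>s. f s - g s) (real k)) \<longlonglongrightarrow> wint_inf (\<lambda>s. f s - g s)"
    using assms(1,3) by (intro wint_minus1_tendsto) (auto intro!: continuous_intros)
  show "(\<lambda>k. wint (-1) (\<lambda>s. f s - g s) (real k)) \<longlonglongrightarrow> wint_inf f - wint_inf g"
    unfolding wint_diff[OF assms(1,3)]
    by (intro tendsto_diff wint_minus1_tendsto[OF assms(1,2)] wint_minus1_tendsto[OF assms(3,4)])
qed

text \<open>The bounded solution of \<open>u'' + 3u' - 4u = f\<close>, \<open>u(0) = 0\<close> on \<open>[0, \<infinity>)\<close>, by variation of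
  constants with the characteristic roots \<open>1\<close> and \<open>-4\<close>; the coefficient of the growing mode
  \<open>e\<^sup>t\<close> is fixed by the tail integrals \<open>\<integral>\<^sub>t\<^sup>\<infinity> e\<^sup>-\<^sup>s f(s) ds\<close> (see \<open>green_eq_tails\<close>).\<close>
definition green :: "(real \<Rightarrow> real) \<Rightarrow> real \<Rightarrow> real" where
  "green f t = ((exp (-4 * t) - exp t) * wint_inf f + exp t * wint (-1) f t
                - exp (-4 * t) * wint 4 f t) / 5"

definition green_deriv :: "(real \<Rightarrow> real) \<Rightarrow> real \<Rightarrow> real" where
  "green_deriv f t = (- (4 * exp (-4 * t) + exp t) * wint_inf f + exp t * wint (-1) f t
                      + 4 * exp (-4 * t) * wint 4 f t) / 5"

lemma green_0 [simp]: "green f 0 = 0"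
  by (simp add: green_def)

lemma green_eq_tails:
  "green f t = ((exp (-4 * t) - exp t) * (wint_inf f - wint (-1) f t)
                 + exp (-4 * t) * (wint (-1) f t - wint 4 f t)) / 5"
  by (simp add: green_def algebra_simps)

lemma green_diff:
  assumes "continuous_on {0..} f" "\<And>s. 0 \<le> s \<Longrightarrow> \<bar>f s\<bar> \<le> M"
    and "continuous_on {0..} g" "\<And>s. 0 \<le> s \<Longrightarrow> \<bar>g s\<bar> \<le> M'"
  shows "green (\<lambda>s. f s - g s) t = green f t - green g t"
  by (simp add: green_def wint_inf_diff[OF assms] wint_diff[OF assms(1,3)] field_simps)

lemma abs_green_le:
  assumes "continuous_on {0..} f" "\<And>s. 0 \<le> s \<Longrightarrow> \<bar>f s\<bar> \<le> M" "0 \<le> t"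
  shows "\<bar>green f t\<bar> \<le> M / 4"
proof -
  have "\<bar>exp (-4 * t) - exp t\<bar> \<le> exp t" using assms(3) by (simp add: abs_le_iff)
  then have "\<bar>(exp (-4 * t) - exp t) * (wint_inf f - wint (-1) f t)\<bar> \<le> exp t * (M * exp (- t))"
    unfolding abs_mult by (intro mult_mono wint_inf_tail[OF assms]) auto
  also have "\<dots> = M" by (simp add: mult.left_commute exp_minus_inverse)
  finally have tail: "\<bar>(exp (-4 * t) - exp t) * (wint_inf f - wint (-1) f t)\<bar> \<le> M" .
  have "\<bar>exp (-4 * t) * (wint (-1) f t - wint 4 f t)\<bar> \<le> exp (-4 * t) * (M * exp (4 * t) / 4)"
    using wint_4_minus_wint_minus1[OF assms] by (simp add: abs_mult abs_minus_commute)
  also have "\<dots> = M / 4" by (simp add: mult_exp_exp)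
  finally show ?thesis
    using tail abs_triangle_ineq[of "(exp (-4 * t) - exp t) * (wint_inf f - wint (-1) f t)"
        "exp (-4 * t) * (wint (-1) f t - wint 4 f t)"]
    unfolding green_eq_tails by (simp add: abs_divide)
qed

lemma green_nonpos:
  assumes "continuous_on {0..} f" "\<And>s. 0 \<le> s \<Longrightarrow> \<bar>f s\<bar> \<le> M" "\<And>s. 0 \<le> s \<Longrightarrow> 0 \<le> f s" "0 \<le> t"
  shows "green f t \<le> 0"
proof -
  have "(exp (-4 * t) - exp t) * (wint_inf f - wint (-1) f t) \<le> 0"
    using assms(4) wint_minus1_le_wint_inf[OF assms] by (intro mult_nonpos_nonneg) auto
  moreover have "exp (-4 * t) * (wint (-1) f t - wint 4 f t) \<le> 0"
    using wint_minus1_le_wint_4[OF assms(1,3,4)] by (simp add: mult_nonneg_nonpos)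
  ultimately show ?thesis unfolding green_eq_tails by simp
qed

lemma
  assumes "continuous_on {0..} f" "0 \<le> t"
  shows green_has_derivative: "(green f has_real_derivative green_deriv f t) (at t within {0..})"
    and green_deriv_has_derivative:
      "(green_deriv f has_real_derivative 4 * green f t - 3 * green_deriv f t + f t) (at t within {0..})"
proof -
  have e1: "((\<lambda>t. exp t * wint (-1) f t) has_real_derivative f t + exp t * wint (-1) f t) (at t within {0..})"
    using exp_wint_has_derivative[OF assms, of "-1"] by simp
  have e4: "((\<lambda>t. exp (-4 * t) * wint 4 f t) has_real_derivative f t - 4 * (exp (-4 * t) * wint 4 f t)) (at t within {0..})"
    using exp_wint_has_derivative[OF assms, of 4] by simp
  have k: "((\<lambda>t. (a * exp (-4 * t) + b * exp t) * wint_inf f) has_real_derivative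
             (-4 * a * exp (-4 * t) + b * exp t) * wint_inf f) (at t within {0..})" for a b
    by (auto intro!: derivative_eq_intros)
  show "(green f has_real_derivative green_deriv f t) (at t within {0..})"
    unfolding green_def[abs_def]
    using DERIV_cdivide[OF DERIV_diff[OF DERIV_add[OF k[of 1 "-1"] e1] e4], of 5]
    by (simp add: green_deriv_def algebra_simps)
  show "(green_deriv f has_real_derivative 4 * green f t - 3 * green_deriv f t + f t) (at t within {0..})"
    unfolding green_deriv_def[abs_def]
    using DERIV_cdivide[OF DERIV_add[OF DERIV_add[OF k[of "-4" "-1"] e1] DERIV_cmult[OF e4, of 4]], of 5]
    by (simp add: green_def field_simps) (erule DERIV_cong, simp add: field_simps)
qed

definition Tm :: "real \<Rightarrow> (real \<Rightarrow> real) \<Rightarrow> real \<Rightarrow> real" where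
  "Tm m v t = -1 + (m + 1) * exp (-4 * t) + green (\<lambda>s. NL m (v s)) t"

definition Tm_deriv :: "real \<Rightarrow> (real \<Rightarrow> real) \<Rightarrow> real \<Rightarrow> real" where
  "Tm_deriv m v t = -4 * (m + 1) * exp (-4 * t) + green_deriv (\<lambda>s. NL m (v s)) t"

lemma continuous_on_NL_comp:
  assumes "m < -1" "continuous_on UNIV v"
  shows "continuous_on {0..} (\<lambda>s. NL m (v s))"
  using continuous_on_compose2[OF continuous_on_NL[OF assms(1)] assms(2)] by (auto intro: continuous_on_subset)

lemma abs_NL_le: "m < -1 \<Longrightarrow> \<bar>NL m v\<bar> \<le> NL m m"
  using NL_bounds[of m v] by simp

lemma Tm_0 [simp]: "Tm m v 0 = m"
  by (simp add: Tm_def)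

lemma
  assumes "m < -1" "continuous_on UNIV v" "0 \<le> t"
  shows Tm_has_derivative: "(Tm m v has_real_derivative Tm_deriv m v t) (at t within {0..})"
    and Tm_deriv_has_derivative:
      "(Tm_deriv m v has_real_derivative 4 * (Tm m v t + 1) + NL m (v t) - 3 * Tm_deriv m v t)
         (at t within {0..})"
proof -
  note c = continuous_on_NL_comp[OF assms(1,2)]
  show "(Tm m v has_real_derivative Tm_deriv m v t) (at t within {0..})"
    unfolding Tm_def[abs_def] Tm_deriv_def
    by (rule derivative_eq_intros green_has_derivative[OF c assms(3)] refl)+ (simp add: algebra_simps)
  show "(Tm_deriv m v has_real_derivative 4 * (Tm m v t + 1) + NL m (v t) - 3 * Tm_deriv m v t) (at t within {0..})"
    unfolding Tm_deriv_def[abs_def]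
    by (rule derivative_eq_intros green_deriv_has_derivative[OF c assms(3)] refl)+
      (simp add: Tm_def algebra_simps)
qed

lemma Tm_lt_minus1:
  assumes "m < -1" "continuous_on UNIV v" "0 \<le> t"
  shows "Tm m v t < -1"
proof -
  have "green (\<lambda>s. NL m (v s)) t \<le> 0"
    using assms by (intro green_nonpos[where M = "NL m m"] continuous_on_NL_comp abs_NL_le NL_bounds)
  moreover have "(m + 1) * exp (-4 * t) < 0" using assms(1) by (simp add: mult_neg_pos)
  ultimately show ?thesis by (simp add: Tm_def)
qed

lemma abs_Tm_plus1_le:
  assumes "m < -1" "continuous_on UNIV v" "0 \<le> t"
  shows "\<bar>Tm m v t + 1\<bar> \<le> \<bar>m + 1\<bar> + NL m m / 4"
proof -
  have "\<bar>green (\<lambda>s. NL m (v s)) t\<bar> \<le> NL m m / 4"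
    using assms by (intro abs_green_le continuous_on_NL_comp abs_NL_le)
  moreover have "\<bar>(m + 1) * exp (-4 * t)\<bar> \<le> \<bar>m + 1\<bar>"
    using assms(3) by (simp add: abs_mult mult_left_le)
  ultimately show ?thesis unfolding Tm_def by linarith
qed

lemma Tm_lipschitz:
  assumes "m < -1" "continuous_on UNIV v1" "continuous_on UNIV v2" "0 \<le> t"
    and "\<And>s. 0 \<le> s \<Longrightarrow> \<bar>v1 s - v2 s\<bar> \<le> L"
  shows "\<bar>Tm m v1 t - Tm m v2 t\<bar> \<le> (4 - kappa m) / 4 * L"
proof -
  note c1 = continuous_on_NL_comp[OF assms(1,2)] and c2 = continuous_on_NL_comp[OF assms(1,3)]
  have "\<bar>NL m (v1 s) - NL m (v2 s)\<bar> \<le> (4 - kappa m) * L" if "0 \<le> s" for s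
    using NL_lipschitz[OF assms(1)] assms(5)[OF that] kappa_bounds[OF assms(1)]
    by (meson diff_ge_0_iff_ge dual_order.trans less_imp_le mult_left_mono)
  then have "\<bar>green (\<lambda>s. NL m (v1 s) - NL m (v2 s)) t\<bar> \<le> (4 - kappa m) * L / 4"
    using c1 c2 assms(4) by (intro abs_green_le continuous_intros)
  then show ?thesis
    unfolding Tm_def green_diff[OF c1 abs_NL_le[OF assms(1)] c2 abs_NL_le[OF assms(1)]] by simp
qed

text \<open>Only values on \<open>[0, \<infinity>)\<close> matter; extending the image constantly to \<open>t < 0\<close> lets
  Banach's fixed point theorem run in the complete space of bounded continuous functions on \<open>\<real>\<close>.\<close>
definition Tbc :: "real \<Rightarrow> (real \<Rightarrow>\<^sub>C real) \<Rightarrow> (real \<Rightarrow>\<^sub>C real)" where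
  "Tbc m v = Bcontfun (\<lambda>t. Tm m (apply_bcontfun v) (max t 0))"

lemma Tbc_apply:
  assumes "m < -1"
  shows "apply_bcontfun (Tbc m v) t = Tm m (apply_bcontfun v) (max t 0)"
proof -
  have "continuous_on {0..} (Tm m (apply_bcontfun v))"
    using Tm_has_derivative[OF assms] by (intro DERIV_continuous_on) auto
  then have "continuous_on UNIV (\<lambda>t. Tm m (apply_bcontfun v) (max t 0))"
    by (rule continuous_on_compose2) (auto intro!: continuous_intros)
  moreover have "norm (Tm m (apply_bcontfun v) (max t 0)) \<le> 1 + \<bar>m + 1\<bar> + NL m m / 4" for t
    using abs_Tm_plus1_le[OF assms, of "apply_bcontfun v" "max t 0"] by (simp add: abs_le_iff)
  ultimately have "(\<lambda>t. Tm m (apply_bcontfun v) (max t 0)) \<in> bcontfun" by (rule bcontfun_normI)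
  then show ?thesis unfolding Tbc_def by (simp add: Bcontfun_inverse)
qed

lemma Tbc_fixed_point:
  assumes "m < -1"
  obtains v where "Tbc m v = v"
proof -
  have "dist (Tbc m v1) (Tbc m v2) \<le> (4 - kappa m) / 4 * dist v1 v2" for v1 v2
  proof (rule dist_bound)
    fix t
    have "\<bar>Tm m (apply_bcontfun v1) (max t 0) - Tm m (apply_bcontfun v2) (max t 0)\<bar>
            \<le> (4 - kappa m) / 4 * dist v1 v2"
      using dist_bounded[of v1 _ v2] by (intro Tm_lipschitz[OF assms]) (auto simp: dist_real_def)
    then show "dist (Tbc m v1 t) (Tbc m v2 t) \<le> (4 - kappa m) / 4 * dist v1 v2"
      by (simp add: Tbc_apply[OF assms] dist_real_def)
  qed
  moreover have "0 \<le> (4 - kappa m) / 4" "(4 - kappa m) / 4 < 1" using kappa_bounds[OF assms] by auto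
  ultimately have "\<exists>!v. Tbc m v = v" by (intro banach_fix_type[of "(4 - kappa m) / 4"]) auto
  then show ?thesis using that by blast
qed

lemma beta0_nonempty:
  assumes m: "m < -1"
  shows "\<exists>n. n \<in> beta0 m"
proof -
  obtain v where v: "Tbc m v = v" using Tbc_fixed_point[OF m] .
  define V where "V = Tm m (apply_bcontfun v)"
  define W where "W = Tm_deriv m (apply_bcontfun v)"
  have cont: "continuous_on UNIV (apply_bcontfun v)" by simp
  have V_fix: "apply_bcontfun v t = V t" if "0 \<le> t" for t
    using Tbc_apply[OF m, of v t] v that by (simp add: V_def)
  have dV: "(V has_real_derivative W t) (at t within {0..})" if "0 \<le> t" for t
    unfolding V_def W_def by (rule Tm_has_derivative[OF m cont that])
  have dW: "(W has_real_derivative Rtr m (V t) - 3 * W t) (at t within {0..})" if "0 \<le> t" for t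
    using Tm_deriv_has_derivative[OF m cont that] V_fix[OF that] by (simp add: V_def W_def Rtr_def)
  have V_lt: "V t < -1" if "0 \<le> t" for t
    unfolding V_def by (rule Tm_lt_minus1[OF m cont that])
  have W_pos: "0 < W t" if "0 \<le> t" for t
  proof (rule damped_ode_deriv_pos[OF mono_Rtr[OF m] dV dW _ _ that])
    show "Rtr m (V s) < 0" if "0 \<le> s" for s using Rtr_neg[OF m V_lt[OF that]] .
    show "- 1 - (\<bar>m + 1\<bar> + NL m m / 4) \<le> V s" if "0 \<le> s" for s
      using abs_Tm_plus1_le[OF m cont that] by (simp add: V_def abs_le_iff)
  qed
  have V_ge: "m \<le> V t" if "0 \<le> t" for t
    using deriv_nonneg_imp_le_within[OF that, of "{0..}" V W] dV W_pos by (simp add: V_def less_imp_le)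
  have "is_solution m (W 0) V W"
    unfolding is_solution_def using dV dW Rtr_eq_Rfun[OF V_ge] by (simp add: V_def)
  then show ?thesis using W_pos V_lt unfolding beta0_def by (fastforce intro: less_imp_le)
qed

lemma beta0_solution_range:
  assumes "is_solution m n V V'" "\<forall>t>0. 0 < V' t \<and> V t \<le> -1" "m < -1" "0 \<le> t"
  shows "m \<le> V t" "V t \<le> -1"
proof -
  have "V 0 \<le> V t"
    by (rule deriv_nonneg_imp_le_within[OF assms(4), of "{0..}" _ V'])
      (use assms(1,2) in \<open>auto simp: is_solution_def less_imp_le\<close>)
  then show "m \<le> V t" using assms(1) by (simp add: is_solution_def)
  show "V t \<le> -1" using assms by (cases "t = 0") (auto simp: is_solution_def)
qed

lemma has_real_derivative_at_0_unique:
  assumes "(f has_real_derivative a) (at 0 within {0..})" "(g has_real_derivative b) (at 0 within {0..})"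
    and "\<And>t. 0 \<le> t \<Longrightarrow> f t = g t"
  shows "a = b"
proof -
  have "(g has_real_derivative a) (at 0 within {0..})"
    by (rule has_field_derivative_transform_within[OF assms(1), of 1]) (use assms(3) in auto)
  moreover have "at (0::real) within {0..} \<noteq> bot" by (simp add: at_within_Ici_at_right)
  ultimately show ?thesis
    using assms(2) vector_derivative_unique_within has_real_derivative_iff_has_vector_derivative by metis
qed

lemma beta0_subsingleton:
  assumes m: "m < -1" and "n1 \<in> beta0 m" "n2 \<in> beta0 m"
  shows "n1 = n2"
proof -
  obtain V1 W1 where s1: "is_solution m n1 V1 W1" and P1: "\<forall>t>0. 0 < W1 t \<and> V1 t \<le> -1"
    using assms(2) by (auto simp: beta0_def)
  obtain V2 W2 where s2: "is_solution m n2 V2 W2" and P2: "\<forall>t>0. 0 < W2 t \<and> V2 t \<le> -1"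
    using assms(3) by (auto simp: beta0_def)
  note r1 = beta0_solution_range[OF s1 P1 m] and r2 = beta0_solution_range[OF s2 P2 m]
  have "V1 t = V2 t" if "0 \<le> t" for t
  proof (rule damped_ode_bounded_solutions_eq[where S = "{m..}" and F = Rfun and B = "-1 - m"
        and U = V1 and U' = W1 and V = V2 and V' = W2, OF _ kappa_bounds(1)[OF m]])
    show "kappa m * (b - a)\<^sup>2 \<le> (b - a) * (Rfun b - Rfun a)" if "a \<in> {m..}" "b \<in> {m..}" for a b
      using Rfun_strongly_mono[OF m] that by simp
    show "\<bar>V2 s - V1 s\<bar> \<le> - 1 - m" if "0 \<le> s" for s
      using r1[OF that] r2[OF that] by (simp add: abs_le_iff)
  qed (use s1 s2 r1 r2 that in \<open>auto simp: is_solution_def\<close>)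
  then show ?thesis
    using s1 s2 by (intro has_real_derivative_at_0_unique[of V1 n1 V2 n2]) (auto simp: is_solution_def)
qed

theorem lemma4p5:
  fixes m :: real
  assumes "m < -1"
  shows "\<exists>n. beta0 m = {n}"
  using beta0_nonempty[OF assms] beta0_subsingleton[OF assms] by blast

end
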